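(* For every $k\in[-\pi,\pi)$, the eigenspace $\{u\in\ell^2(\mathbb Z;\mathbb C^6):\hat H_{\mathrm I}(k)u=0\}$ is even-dimensional.
   Context: Parameters $b_\pm>0$, $\delta_\pm$ with $b_\pm+\delta_\pm>0$, $c>0$. For $n\in\mathbb Z$ let $b_n=b_+$ ($n\ge0$), $b_n=b_-$ ($n\le-1$); $c_n=b_++\delta_+$ ($n\ge0$), $c_{-1}=c$, $c_n=b_-+\delta_-$ ($n\le-2$); $d_n=b_++\delta_+$ ($n\ge0$), $d_n=b_-+\delta_-$ ($n\le-1$). $\hat H_{\mathrm I}(k)$ acts on $u=\{(u_{j,n})_{j=1}^6\}_{n\in\mathbb Z}\in\ell^2(\mathbb Z;\mathbb C^6)$ by $(\hat H_{\mathrm I}(k)u)_{1,n}=-b_nu_{4,n}-b_nu_{5,n}-c_{n-1}e^{-ik}u_{6,n-1}$, $(\hat H_{\mathrm I}(k)u)_{2,n}=-b_nu_{4,n}-d_ne^{ik}u_{5,n}-b_nu_{6,n}$, $(\hat H_{\mathrm I}(k)u)_{3,n}=-c_nu_{4,n+1}-b_nu_{5,n}-b_nu_{6,n}$, $(\hat H_{\mathrm I}(k)u)_{4,n}=-b_nu_{1,n}-b_nu_{2,n}-c_{n-1}u_{3,n-1}$, $(\hat H_{\mathrm I}(k)u)_{5,n}=-b_nu_{1,n}-d_ne^{-ik}u_{2,n}-b_nu_{3,n}$, $(\hat H_{\mathrm I}(k)u)_{6,n}=-c_ne^{ik}u_{1,n+1}-b_nu_{2,n}-b_nu_{3,n}$.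 *)

theory Defs
  imports "HOL-Analysis.Analysis" "HOL-Library.Function_Algebras"
begin

text \<open>Vectors u in l^2(Z; C^6) are represented as functions u :: int => nat => complex,
  u n j being the component u_{j,n}, with j ranging over {1..6} (components outside
  {1..6} are required to vanish).\<close>

type_synonym seq6 = "int \<Rightarrow> nat \<Rightarrow> complex"

definition ell2_6 :: "seq6 set" where
  "ell2_6 = {u. (\<forall>n j. j \<notin> {1..6} \<longrightarrow> u n j = 0) \<and>
                 (\<lambda>n. \<Sum>j\<in>{1..6}. (cmod (u n j))\<^sup>2) summable_on (UNIV :: int set)}"

definition scale6 :: "complex \<Rightarrow> seq6 \<Rightarrow> seq6" where
  "scale6 a u = (\<lambda>n j. a * u n j)"

interpretation s6: vector_space scale6
  by unfold_locales (auto simp: scale6_def fun_eq_iff algebra_simps)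

definition bseq :: "real \<Rightarrow> real \<Rightarrow> int \<Rightarrow> real" where
  "bseq bp bm n = (if n \<ge> 0 then bp else bm)"

definition cseq :: "real \<Rightarrow> real \<Rightarrow> real \<Rightarrow> real \<Rightarrow> real \<Rightarrow> int \<Rightarrow> real" where
  "cseq bp bm dp dm c n = (if n \<ge> 0 then bp + dp else if n = -1 then c else bm + dm)"

definition dseq :: "real \<Rightarrow> real \<Rightarrow> real \<Rightarrow> real \<Rightarrow> int \<Rightarrow> real" where
  "dseq bp bm dp dm n = (if n \<ge> 0 then bp + dp else bm + dm)"

definition HI :: "real \<Rightarrow> real \<Rightarrow> real \<Rightarrow> real \<Rightarrow> real \<Rightarrow> real \<Rightarrow> seq6 \<Rightarrow> seq6" where
  "HI bp bm dp dm c k u = (\<lambda>n j.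
     let b = complex_of_real (bseq bp bm n);
         cn = complex_of_real (cseq bp bm dp dm c n);
         cm = complex_of_real (cseq bp bm dp dm c (n - 1));
         d = complex_of_real (dseq bp bm dp dm n);
         e = cis k
     in if j = 1 then - b * u n 4 - b * u n 5 - cm * inverse e * u (n - 1) 6
        else if j = 2 then - b * u n 4 - d * e * u n 5 - b * u n 6
        else if j = 3 then - cn * u (n + 1) 4 - b * u n 5 - b * u n 6
        else if j = 4 then - b * u n 1 - b * u n 2 - cm * u (n - 1) 3
        else if j = 5 then - b * u n 1 - d * inverse e * u n 2 - b * u n 3
        else if j = 6 then - cn * e * u (n + 1) 1 - b * u n 2 - b * u n 3
        else 0)"

definition kerHI :: "real \<Rightarrow> real \<Rightarrow> real \<Rightarrow> real \<Rightarrow> real \<Rightarrow> real \<Rightarrow> seq6 set" where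
  "kerHI bp bm dp dm c k = {u \<in> ell2_6. HI bp bm dp dm c k u = (\<lambda>n j. 0)}"

end

theory Submission
  imports Defs
begin

text \<open>The operator exchanges the components 4-6 with the components 1-3 (chiral symmetry), so
  its kernel is the direct sum of the kernel vectors supported on components 4-6 and those
  supported on components 1-3. The antilinear map u \<mapsto> e^{-ink} conj(u) with components
  j and j+3 swapped commutes with the operator and exchanges the two sectors, so they have the
  same dimension. That dimension is finite: on the sector of components 4-6 the kernel equations
  are a recursion for the pair (u_{n,4}, u_{n-1,6}) that runs both forwards and backwards because
  all b_n and c_n are nonzero, so a kernel vector is determined by (u_{0,4}, u_{-1,6}) in C^2.\<close>

lemma (in vector_space) semilinear_image_span_subset:
  assumes add: "\<And>x y. f (x + y) = f x + f y"
    and scale: "\<And>a x. f (scale a x) = scale (\<sigma> a) (f x)"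
  shows "f ` span S \<subseteq> span (f ` S)"
proof -
  have "f 0 = 0" using add[of 0 0] by simp
  then have "subspace {x. f x \<in> span (f ` S)}"
    unfolding subspace_def by (auto simp: add scale intro: span_zero span_add span_scale)
  then have "span S \<subseteq> {x. f x \<in> span (f ` S)}"
    by (rule span_minimal[rotated]) (auto intro: span_base)
  then show ?thesis by blast
qed

lemma (in vector_space) dim_semilinear_image_le:
  assumes add: "\<And>x y. f (x + y) = f x + f y"
    and scale: "\<And>a x. f (scale a x) = scale (\<sigma> a) (f x)"
    and "finite B" "V \<subseteq> span B"
  shows "dim (f ` V) \<le> dim V"
proof -
  obtain A where A: "A \<subseteq> V" "independent A" "V \<subseteq> span A" "card A = dim V"
    by (rule basis_exists)
  have "finite A"
    using independent_span_bound[OF \<open>finite B\<close> \<open>independent A\<close>] A(1) assms(4) by blast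
  have "f ` V \<subseteq> span (f ` A)"
    using A(3) semilinear_image_span_subset[OF add scale, of A] by blast
  then have "dim (f ` V) \<le> card (f ` A)"
    using \<open>finite A\<close> by (simp add: dim_le_card)
  also have "\<dots> \<le> dim V"
    using card_image_le[OF \<open>finite A\<close>] A(4) by simp
  finally show ?thesis .
qed

lemma (in vector_space) independent_Un_if_span_Int_0:
  assumes "finite B" "independent A" "independent B" "span A \<inter> span B \<subseteq> {0}"
  shows "independent (A \<union> B)"
  using assms
proof (induction B rule: finite_induct)
  case empty
  then show ?case by simp
next
  case (insert b B)
  have "independent B" "b \<notin> span B"
    using insert.prems(2) insert.hyps(2) by (auto simp: independent_insert)
  moreover have "span A \<inter> span B \<subseteq> {0}"
    using insert.prems(3) span_mono[of B "insert b B"] by blast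
  ultimately have IH: "independent (A \<union> B)"
    using insert.IH insert.prems(1) by blast
  have "b \<notin> span (A \<union> B)"
  proof
    assume "b \<in> span (A \<union> B)"
    then obtain x y where xy: "b = x + y" "x \<in> span A" "y \<in> span B"
      unfolding span_Un by blast
    have "x = b - y" using xy(1) by simp
    also have "\<dots> \<in> span (insert b B)"
      using xy(3) span_mono[of B "insert b B"] by (intro span_diff) (auto intro: span_base)
    finally have "x = 0" using insert.prems(3) xy(2) by blast
    then show False using xy \<open>b \<notin> span B\<close> by simp
  qed
  then show ?case using IH
    by (metis Un_insert_right insert_absorb independent_insert)
qed

lemma (in vector_space) dim_sums_Int_0:
  assumes "subspace V" "subspace W" "V \<inter> W \<subseteq> {0}"
    and "finite BV" "V \<subseteq> span BV" "finite BW" "W \<subseteq> span BW"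
  shows "\<exists>B. finite B \<and> span B = {x + y | x y. x \<in> V \<and> y \<in> W}"
    and "dim {x + y | x y. x \<in> V \<and> y \<in> W} = dim V + dim W"
proof -
  obtain A where A: "A \<subseteq> V" "independent A" "V \<subseteq> span A" "card A = dim V"
    by (rule basis_exists)
  obtain B where B: "B \<subseteq> W" "independent B" "W \<subseteq> span B" "card B = dim W"
    by (rule basis_exists)
  have "finite A" "finite B"
    using independent_span_bound A B assms(4-7) by (meson order_trans)+
  have "span A = V" "span B = W"
    using A B assms(1,2) by (simp_all add: span_subspace)
  then have span_AB: "span (A \<union> B) = {x + y | x y. x \<in> V \<and> y \<in> W}"
    by (simp add: span_Un)
  have "independent (A \<union> B)"
    using independent_Un_if_span_Int_0[OF \<open>finite B\<close> A(2) B(2)] \<open>span A = V\<close> \<open>span B = W\<close>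
      assms(3) by blast
  moreover have "A \<inter> B = {}"
    using A(1,2) B(1) assms(3) dependent_zero by blast
  ultimately have "dim {x + y | x y. x \<in> V \<and> y \<in> W} = card A + card B"
    using span_AB dim_span_eq_card_independent[of "A \<union> B"]
      card_Un_disjoint[OF \<open>finite A\<close> \<open>finite B\<close>] by simp
  then show "dim {x + y | x y. x \<in> V \<and> y \<in> W} = dim V + dim W"
    using A(4) B(4) by simp
  show "\<exists>B. finite B \<and> span B = {x + y | x y. x \<in> V \<and> y \<in> W}"
    using span_AB \<open>finite A\<close> \<open>finite B\<close> by blast
qed

lemma independent_finite_if_inj_on_linear:
  assumes "module_hom s1 s2 f" "finite_dimensional_vector_space s2 E"
    and "module.independent s1 B" "inj_on f (module.span s1 B)"
  shows "finite B"
proof -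
  interpret f: module_hom s1 s2 f by (rule assms(1))
  interpret s2: finite_dimensional_vector_space s2 E by (rule assms(2))
  have "finite (f ` B)"
    using f.independent_injective_image[OF assms(3,4)] by (rule s2.finiteI_independent)
  moreover have "inj_on f B"
    using assms(4) f.m1.span_superset inj_on_subset by blast
  ultimately show ?thesis by (rule finite_imageD)
qed

lemma ell2_6_vanishes: "u \<in> ell2_6 \<Longrightarrow> j \<notin> {1..6} \<Longrightarrow> u n j = 0"
  by (simp add: ell2_6_def)

lemma ell2_6_row_norm_le:
  assumes "u \<in> ell2_6" "\<And>n j. j \<notin> {1..6} \<Longrightarrow> v n j = 0"
    and "\<And>n. (\<Sum>j\<in>{1..6}. (cmod (v n j))\<^sup>2) \<le> (\<Sum>j\<in>{1..6}. (cmod (u n j))\<^sup>2)"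
  shows "v \<in> ell2_6"
proof -
  have "(\<lambda>n. \<Sum>j\<in>{1..6}. (cmod (v n j))\<^sup>2) summable_on (UNIV :: int set)"
    using assms(1) unfolding ell2_6_def
    by (intro summable_on_comparison_test[OF _ assms(3)]) (auto intro: sum_nonneg)
  then show ?thesis using assms(2) by (simp add: ell2_6_def)
qed

lemma ell2_6_dominated:
  assumes "u \<in> ell2_6" "\<And>n j. cmod (v n j) \<le> cmod (u n j)"
  shows "v \<in> ell2_6"
proof (rule ell2_6_row_norm_le[OF assms(1)])
  show "v n j = 0" if "j \<notin> {1..6}" for n j
    using assms(2)[of n j] ell2_6_vanishes[OF assms(1) that] by simp
  show "(\<Sum>j\<in>{1..6}. (cmod (v n j))\<^sup>2) \<le> (\<Sum>j\<in>{1..6}. (cmod (u n j))\<^sup>2)" for n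
    by (intro sum_mono power_mono assms(2)) simp
qed

lemma ell2_6_add:
  assumes "u \<in> ell2_6" "v \<in> ell2_6"
  shows "u + v \<in> ell2_6"
proof -
  let ?row = "\<lambda>w n. \<Sum>j\<in>{1..6}. (cmod ((w :: seq6) n j))\<^sup>2"
  have "(\<lambda>n. 2 * ?row u n + 2 * ?row v n) summable_on (UNIV :: int set)"
    using assms unfolding ell2_6_def by (intro summable_on_add summable_on_cmult_right) auto
  moreover have "(cmod (x + y))\<^sup>2 \<le> 2 * (cmod x)\<^sup>2 + 2 * (cmod y)\<^sup>2" for x y :: complex
  proof -
    have "(cmod (x + y))\<^sup>2 \<le> (cmod x + cmod y)\<^sup>2"
      by (simp add: norm_triangle_ineq power_mono)
    also have "\<dots> \<le> 2 * (cmod x)\<^sup>2 + 2 * (cmod y)\<^sup>2"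
      using sum_squares_ge_zero[of "cmod x - cmod y" 0]
      by (simp add: power2_eq_square algebra_simps)
    finally show ?thesis .
  qed
  then have "?row (u + v) n \<le> 2 * ?row u n + 2 * ?row v n" for n
    unfolding sum_distrib_left sum.distrib[symmetric] by (intro sum_mono) simp
  ultimately have "?row (u + v) summable_on (UNIV :: int set)"
    by (rule summable_on_comparison_test) (auto intro: sum_nonneg)
  then show ?thesis using assms by (simp add: ell2_6_def)
qed

lemma ell2_6_scale: "u \<in> ell2_6 \<Longrightarrow> scale6 a u \<in> ell2_6"
  unfolding ell2_6_def scale6_def
  by (auto simp: norm_mult power_mult_distrib sum_distrib_left[symmetric]
      intro: summable_on_cmult_right)

lemma subspace_ell2_6: "s6.subspace ell2_6"
proof (rule s6.subspaceI)
  show "0 \<in> ell2_6" by (simp add: ell2_6_def summable_on_0)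
qed (simp_all add: ell2_6_add ell2_6_scale)

definition restrict_comps :: "nat set \<Rightarrow> seq6 \<Rightarrow> seq6" where
  "restrict_comps S u = (\<lambda>n j. if j \<in> S then u n j else 0)"

definition chiral_conj :: "real \<Rightarrow> seq6 \<Rightarrow> seq6" where
  "chiral_conj k u = (\<lambda>n j. if j \<in> {1..6}
     then cis (- (of_int n * k)) * cnj (u n (if j \<le> 3 then j + 3 else j - 3)) else 0)"

lemma restrict_comps_ell2_6: "u \<in> ell2_6 \<Longrightarrow> restrict_comps S u \<in> ell2_6"
  by (rule ell2_6_dominated) (auto simp: restrict_comps_def)

lemma restrict_comps_sum:
  "u \<in> ell2_6 \<Longrightarrow> restrict_comps {4,5,6} u + restrict_comps {1,2,3} u = u"
  by (auto simp: fun_eq_iff restrict_comps_def ell2_6_vanishes)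

lemma sum_atLeastAtMost_1_6:
  "(\<Sum>j\<in>{1..6::nat}. f j) = f 1 + f 2 + f 3 + f 4 + f 5 + (f 6 :: 'a::comm_monoid_add)"
  by (simp add: numeral_eq_Suc add.assoc)

lemma chiral_conj_ell2_6:
  assumes "u \<in> ell2_6"
  shows "chiral_conj k u \<in> ell2_6"
proof (rule ell2_6_row_norm_le[OF assms])
  show "chiral_conj k u n j = 0" if "j \<notin> {1..6}" for n j
    using that by (auto simp: chiral_conj_def)
  show "(\<Sum>j\<in>{1..6}. (cmod (chiral_conj k u n j))\<^sup>2) \<le> (\<Sum>j\<in>{1..6}. (cmod (u n j))\<^sup>2)" for n
    unfolding sum_atLeastAtMost_1_6 by (simp add: chiral_conj_def norm_mult add_ac)
qed

lemma chiral_conj_add: "chiral_conj k (u + v) = chiral_conj k u + chiral_conj k v"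
  by (simp add: chiral_conj_def fun_eq_iff algebra_simps)

lemma chiral_conj_scale: "chiral_conj k (scale6 a u) = scale6 (cnj a) (chiral_conj k u)"
  by (simp add: chiral_conj_def fun_eq_iff scale6_def algebra_simps)

lemma chiral_conj_involutive: "u \<in> ell2_6 \<Longrightarrow> chiral_conj k (chiral_conj k u) = u"
  by (auto simp: fun_eq_iff chiral_conj_def ell2_6_vanishes cis_cnj cis_mult mult.assoc[symmetric])

lemma chiral_conj_restrict_comps:
  "chiral_conj k (restrict_comps {4,5,6} u) = restrict_comps {1,2,3} (chiral_conj k u)"
  "chiral_conj k (restrict_comps {1,2,3} u) = restrict_comps {4,5,6} (chiral_conj k u)"
  by (auto simp: fun_eq_iff chiral_conj_def restrict_comps_def)

lemma restrict_comps_restrict_comps: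
  "restrict_comps S (restrict_comps T u) = restrict_comps (S \<inter> T) u"
  by (simp add: restrict_comps_def fun_eq_iff)

lemma restrict_comps_zero [simp]: "restrict_comps S (\<lambda>n j. 0) = (\<lambda>n j. 0)"
  by (simp add: restrict_comps_def)

lemma restrict_comps_eq_self_iff:
  "restrict_comps S u = u \<longleftrightarrow> (\<forall>n j. j \<notin> S \<longrightarrow> u n j = 0)"
  by (auto simp: restrict_comps_def fun_eq_iff)

lemma HI_module_hom: "module_hom scale6 scale6 (HI bp bm dp dm c k)"
  by unfold_locales (simp_all add: HI_def Let_def fun_eq_iff scale6_def algebra_simps)

lemma HI_restrict_comps:
  "HI bp bm dp dm c k (restrict_comps {4,5,6} u) = restrict_comps {1,2,3} (HI bp bm dp dm c k u)"
  "HI bp bm dp dm c k (restrict_comps {1,2,3} u) = restrict_comps {4,5,6} (HI bp bm dp dm c k u)"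
  by (simp_all add: HI_def restrict_comps_def Let_def fun_eq_iff)

lemma HI_chiral_conj:
  "HI bp bm dp dm c k (chiral_conj k u) = chiral_conj k (HI bp bm dp dm c k u)"
proof -
  have phase: "cis (- (of_int (n + i) * k)) = cis (- (of_int n * k)) * cis (- (of_int i * k))"
    for n i :: int
    by (simp add: cis_mult algebra_simps)
  show ?thesis
    by (auto simp: fun_eq_iff HI_def chiral_conj_def Let_def phase cis_cnj cis_mult
        cis_inverse algebra_simps)
qed

lemma HI_eq_0_transfer:
  assumes "HI bp bm dp dm c k u n 1 = 0" "HI bp bm dp dm c k u n 2 = 0"
    "HI bp bm dp dm c k u n 3 = 0"
    and "bseq bp bm n \<noteq> 0" "cseq bp bm dp dm c n \<noteq> 0" "cseq bp bm dp dm c (n - 1) \<noteq> 0"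
  shows "u n 4 = 0 \<and> u (n - 1) 6 = 0 \<longleftrightarrow> u (n + 1) 4 = 0 \<and> u n 6 = 0"
    and "u n 4 = 0 \<and> u (n - 1) 6 = 0 \<Longrightarrow> u n 5 = 0"
proof -
  define b where "b = complex_of_real (bseq bp bm n)"
  define cn where "cn = complex_of_real (cseq bp bm dp dm c n)"
  define cm where "cm = complex_of_real (cseq bp bm dp dm c (n - 1))"
  define d where "d = complex_of_real (dseq bp bm dp dm n)"
  have nonzero: "b \<noteq> 0" "cn \<noteq> 0" "cm * inverse (cis k) \<noteq> 0"
    using assms(4-6) by (simp_all add: b_def cn_def cm_def)
  have e1: "- b * u n 4 - b * u n 5 - cm * inverse (cis k) * u (n - 1) 6 = 0"
    using assms(1) by (simp add: HI_def Let_def b_def cm_def)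
  have e2: "- b * u n 4 - d * cis k * u n 5 - b * u n 6 = 0"
    using assms(2) by (simp add: HI_def Let_def b_def d_def)
  have e3: "- cn * u (n + 1) 4 - b * u n 5 - b * u n 6 = 0"
    using assms(3) by (simp add: HI_def Let_def b_def cn_def)
  show middle: "u n 5 = 0" if "u n 4 = 0 \<and> u (n - 1) 6 = 0"
    using e1 that nonzero by simp
  show "u n 4 = 0 \<and> u (n - 1) 6 = 0 \<longleftrightarrow> u (n + 1) 4 = 0 \<and> u n 6 = 0"
  proof
    assume left: "u n 4 = 0 \<and> u (n - 1) 6 = 0"
    then have "u n 6 = 0" using e2 middle[OF left] nonzero by simp
    moreover have "u (n + 1) 4 = 0" using e3 middle[OF left] \<open>u n 6 = 0\<close> nonzero by simp
    ultimately show "u (n + 1) 4 = 0 \<and> u n 6 = 0" by simp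
  next
    assume right: "u (n + 1) 4 = 0 \<and> u n 6 = 0"
    then have "u n 5 = 0" using e3 nonzero by simp
    then have "u n 4 = 0" using e2 right nonzero by simp
    moreover have "u (n - 1) 6 = 0" using e1 \<open>u n 5 = 0\<close> \<open>u n 4 = 0\<close> nonzero by simp
    ultimately show "u n 4 = 0 \<and> u (n - 1) 6 = 0" by simp
  qed
qed

definition boundary_values :: "seq6 \<Rightarrow> complex ^ 2" where
  "boundary_values u = vector [u 0 4, u (-1) 6]"

lemma boundary_values_module_hom: "module_hom scale6 (*s) boundary_values"
  by unfold_locales (simp_all add: boundary_values_def scale6_def vec_eq_iff forall_2)

context
  fixes bp bm dp dm c k :: real
begin

abbreviation (input) K :: "seq6 set" where "K \<equiv> kerHI bp bm dp dm c k"

definition kernel_sector :: "nat set \<Rightarrow> seq6 set" where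
  "kernel_sector S = {u \<in> K. restrict_comps S u = u}"

lemma subspace_kerHI: "s6.subspace K"
proof -
  interpret H: module_hom scale6 scale6 "HI bp bm dp dm c k" by (rule HI_module_hom)
  have "K = ell2_6 \<inter> {u. HI bp bm dp dm c k u = 0}"
    by (auto simp: kerHI_def zero_fun_def)
  then show ?thesis
    using s6.subspace_inter[OF subspace_ell2_6 H.subspace_kernel] by simp
qed

lemma subspace_kernel_sector: "s6.subspace (kernel_sector S)"
proof -
  have "s6.subspace {u. restrict_comps S u = u}"
    by (rule s6.subspaceI) (auto simp: restrict_comps_eq_self_iff scale6_def)
  then have "s6.subspace (K \<inter> {u. restrict_comps S u = u})"
    by (rule s6.subspace_inter[OF subspace_kerHI])
  then show ?thesis by (simp add: kernel_sector_def Int_def)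
qed

lemma restrict_comps_in_kernel_sector:
  assumes "u \<in> K"
  shows "restrict_comps {4,5,6} u \<in> kernel_sector {4,5,6}"
    and "restrict_comps {1,2,3} u \<in> kernel_sector {1,2,3}"
proof -
  have u: "u \<in> ell2_6" "HI bp bm dp dm c k u = (\<lambda>n j. 0)"
    using assms by (simp_all add: kerHI_def)
  show "restrict_comps {4,5,6} u \<in> kernel_sector {4,5,6}"
    "restrict_comps {1,2,3} u \<in> kernel_sector {1,2,3}"
    unfolding kernel_sector_def kerHI_def mem_Collect_eq HI_restrict_comps u(2)
      restrict_comps_zero restrict_comps_restrict_comps Int_absorb
    using restrict_comps_ell2_6[OF u(1)] by simp_all
qed

lemma kerHI_eq_sums:
  "K = {x + y | x y. x \<in> kernel_sector {4,5,6} \<and> y \<in> kernel_sector {1,2,3}}"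
proof
  show "K \<subseteq> {x + y | x y. x \<in> kernel_sector {4,5,6} \<and> y \<in> kernel_sector {1,2,3}}"
  proof
    fix u
    assume "u \<in> K"
    then have "u = restrict_comps {4,5,6} u + restrict_comps {1,2,3} u"
      using restrict_comps_sum[of u] by (simp add: kerHI_def)
    then show "u \<in> {x + y | x y. x \<in> kernel_sector {4,5,6} \<and> y \<in> kernel_sector {1,2,3}}"
      using restrict_comps_in_kernel_sector[OF \<open>u \<in> K\<close>] by blast
  qed
  show "{x + y | x y. x \<in> kernel_sector {4,5,6} \<and> y \<in> kernel_sector {1,2,3}} \<subseteq> K"
    using s6.subspace_add[OF subspace_kerHI] by (auto simp: kernel_sector_def)
qed

lemma kernel_sectors_Int: "kernel_sector {4,5,6} \<inter> kernel_sector {1,2,3} \<subseteq> {0}"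
proof
  fix x
  assume "x \<in> kernel_sector {4,5,6} \<inter> kernel_sector {1,2,3}"
  then have "x = restrict_comps {1,2,3} (restrict_comps {4,5,6} x)"
    by (simp add: kernel_sector_def)
  also have "\<dots> = 0"
    by (auto simp: restrict_comps_def fun_eq_iff)
  finally show "x \<in> {0}" by simp
qed

lemma chiral_conj_in_kernel_sector:
  assumes "u \<in> kernel_sector S"
    and "chiral_conj k (restrict_comps S u) = restrict_comps T (chiral_conj k u)"
  shows "chiral_conj k u \<in> kernel_sector T"
proof -
  have u: "u \<in> ell2_6" "HI bp bm dp dm c k u = (\<lambda>n j. 0)" "restrict_comps S u = u"
    using assms(1) by (simp_all add: kernel_sector_def kerHI_def)
  have "HI bp bm dp dm c k (chiral_conj k u) = (\<lambda>n j. 0)"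
    unfolding HI_chiral_conj u(2) by (simp add: chiral_conj_def fun_eq_iff)
  moreover have "restrict_comps T (chiral_conj k u) = chiral_conj k u"
    using assms(2) u(3) by simp
  ultimately show ?thesis
    by (simp add: kernel_sector_def kerHI_def chiral_conj_ell2_6 u(1))
qed

lemma chiral_conj_image_kernel_sector:
  assumes "\<And>u. chiral_conj k (restrict_comps S u) = restrict_comps T (chiral_conj k u)"
    and "\<And>u. chiral_conj k (restrict_comps T u) = restrict_comps S (chiral_conj k u)"
  shows "chiral_conj k ` kernel_sector S = kernel_sector T"
proof
  show "chiral_conj k ` kernel_sector S \<subseteq> kernel_sector T"
    using chiral_conj_in_kernel_sector assms(1) by blast
  show "kernel_sector T \<subseteq> chiral_conj k ` kernel_sector S"
  proof
    fix v
    assume v: "v \<in> kernel_sector T"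
    then have "v = chiral_conj k (chiral_conj k v)"
      by (simp add: chiral_conj_involutive kernel_sector_def kerHI_def)
    then show "v \<in> chiral_conj k ` kernel_sector S"
      using chiral_conj_in_kernel_sector[OF v assms(2)] by blast
  qed
qed

lemma chiral_conj_exchanges_kernel_sectors:
  "chiral_conj k ` kernel_sector {4,5,6} = kernel_sector {1,2,3}"
  "chiral_conj k ` kernel_sector {1,2,3} = kernel_sector {4,5,6}"
  by (rule chiral_conj_image_kernel_sector, (rule chiral_conj_restrict_comps)+)+

lemma dim_kernel_sectors_eq:
  assumes "finite B" "kernel_sector {4,5,6} \<subseteq> s6.span B"
  shows "kernel_sector {1,2,3} \<subseteq> s6.span (chiral_conj k ` B)"
    and "s6.dim (kernel_sector {1,2,3}) = s6.dim (kernel_sector {4,5,6})"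
proof -
  note J = chiral_conj_add[of k] chiral_conj_scale[of k]
  show W_span: "kernel_sector {1,2,3} \<subseteq> s6.span (chiral_conj k ` B)"
    unfolding chiral_conj_exchanges_kernel_sectors(1)[symmetric]
    using image_mono[OF assms(2)] s6.semilinear_image_span_subset[OF J] by (rule order_trans)
  show "s6.dim (kernel_sector {1,2,3}) = s6.dim (kernel_sector {4,5,6})"
  proof (rule antisym)
    show "s6.dim (kernel_sector {1,2,3}) \<le> s6.dim (kernel_sector {4,5,6})"
      using s6.dim_semilinear_image_le[OF J assms]
      unfolding chiral_conj_exchanges_kernel_sectors(1) .
    show "s6.dim (kernel_sector {4,5,6}) \<le> s6.dim (kernel_sector {1,2,3})"
      using s6.dim_semilinear_image_le[OF J finite_imageI[OF assms(1)] W_span]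
      unfolding chiral_conj_exchanges_kernel_sectors(2) .
  qed
qed

context
  assumes b_nonzero: "\<And>n. bseq bp bm n \<noteq> 0"
    and c_nonzero: "\<And>n. cseq bp bm dp dm c n \<noteq> 0"
begin

lemma kernel_sector_456_eq_0:
  assumes "u \<in> kernel_sector {4,5,6}" "u 0 4 = 0" "u (-1) 6 = 0"
  shows "u = 0"
proof -
  have u: "HI bp bm dp dm c k u = (\<lambda>n j. 0)" "restrict_comps {4,5,6} u = u"
    using assms(1) by (simp_all add: kernel_sector_def kerHI_def)
  note transfer = HI_eq_0_transfer[of bp bm dp dm c k u, unfolded u(1),
      OF refl refl refl b_nonzero c_nonzero c_nonzero]
  have state: "u n 4 = 0 \<and> u (n - 1) 6 = 0" for n
  proof (induction n rule: int_induct[where k = 0])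
    case base
    then show ?case using assms(2,3) by simp
  next
    case (step1 i)
    then show ?case using transfer(1)[of i] by simp
  next
    case (step2 i)
    then show ?case using transfer(1)[of "i - 1"] by simp
  qed
  have "u n j = 0" for n j
  proof -
    consider "j = 4" | "j = 5" | "j = 6" | "j \<notin> {4,5,6}" by blast
    then show ?thesis
    proof cases
      case 3
      then show ?thesis using state[of "n + 1"] by simp
    next
      case 4
      then show ?thesis using u(2) by (simp add: restrict_comps_eq_self_iff)
    qed (use state transfer(2) in simp_all)
  qed
  then show ?thesis by (simp add: fun_eq_iff)
qed

lemma finite_basis_kernel_sector_456:
  obtains B where "finite B" "kernel_sector {4,5,6} \<subseteq> s6.span B"
proof -
  obtain B where B: "B \<subseteq> kernel_sector {4,5,6}" "s6.independent B"
    "kernel_sector {4,5,6} \<subseteq> s6.span B"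
    by (rule s6.basis_exists)
  interpret bv: module_hom scale6 "(*s)" boundary_values by (rule boundary_values_module_hom)
  have "inj_on boundary_values (kernel_sector {4,5,6})"
    unfolding bv.inj_on_iff_eq_0[OF subspace_kernel_sector]
    by (auto simp: boundary_values_def vec_eq_iff forall_2 intro: kernel_sector_456_eq_0)
  moreover have "s6.span B \<subseteq> kernel_sector {4,5,6}"
    using B(1) subspace_kernel_sector by (rule s6.span_minimal)
  ultimately have "inj_on boundary_values (s6.span B)" by (rule inj_on_subset)
  then have "finite B"
    using independent_finite_if_inj_on_linear[OF boundary_values_module_hom
        vec.finite_dimensional_vector_space_axioms B(2)] by blast
  then show ?thesis using B(3) that by blast
qed

end

end

theorem proposition2:
  fixes bp bm dp dm c k :: real
  assumes "bp > 0" and "bm > 0" and "bp + dp > 0" and "bm + dm > 0" and "c > 0"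
    and "k \<in> {-pi..<pi}"
  shows "(\<exists>B. finite B \<and> s6.span B = kerHI bp bm dp dm c k)
         \<and> even (s6.dim (kerHI bp bm dp dm c k))"
proof -
  have b_nonzero: "bseq bp bm n \<noteq> 0" and c_nonzero: "cseq bp bm dp dm c n \<noteq> 0" for n
    using assms(1-5) by (simp_all add: bseq_def cseq_def)
  obtain B where B: "finite B" "kernel_sector bp bm dp dm c k {4,5,6} \<subseteq> s6.span B"
    using finite_basis_kernel_sector_456[OF b_nonzero c_nonzero] by blast
  note W = dim_kernel_sectors_eq[OF B]
  note sums = s6.dim_sums_Int_0[OF subspace_kernel_sector subspace_kernel_sector
      kernel_sectors_Int B finite_imageI[OF B(1)] W(1)]
  show ?thesis
    unfolding kerHI_eq_sums[of bp bm dp dm c k] sums(2) W(2) using sums(1) by simp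
qed

end
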